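(* Let $p$ be a prime and let $A$ be a nontrivial finite $p$-group. Then for every integer $k$, $$r_{A\wr \mathbb{Z}/p\mathbb{Z},\,k}=(1-p^{-1})\,r_{A,k}+\frac{r_{A,k-1}^{\,p}}{p}.$$
   Context: For a finite $p$-group $G$ with $|G|=p^g$ and maximum element order $p^{f}$, and for $k\in\mathbb{Z}$, define $r_{G,k}=\frac{1}{p^g}\cdot\#\{x\in G:\ \mathrm{order}(x)\le p^{f-k}\}$. For groups $A,B$, let $K=\prod_{b\in B}A$, on which $B$ acts by $x\cdot(\alpha_b)_b=(\alpha_{x^{-1}b})_b$ for $x\in B$; the wreath product $A\wr B$ is the semidirect product $K\rtimes B$ for this action. *)

theory Defs
  imports "HOL-Algebra.Multiplicative_Group" "HOL-Algebra.Elementary_Groups" "HOL-Library.FuncSet" "HOL-Computational_Algebra.Primes"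
begin

definition p_group :: "nat \<Rightarrow> ('a, 'm) monoid_scheme \<Rightarrow> bool" where
  "p_group p G \<longleftrightarrow> group G \<and> finite (carrier G) \<and> (\<exists>n. order G = p ^ n)"

definition max_ord_exp :: "nat \<Rightarrow> ('a, 'm) monoid_scheme \<Rightarrow> nat" where
  "max_ord_exp p G = (THE f. p ^ f = Max (group.ord G ` carrier G))"

definition r_ratio :: "nat \<Rightarrow> ('a, 'm) monoid_scheme \<Rightarrow> int \<Rightarrow> real" where
  "r_ratio p G k =
     real (card {x \<in> carrier G. real (group.ord G x) \<le> real p powi (int (max_ord_exp p G) - k)})
       / real (order G)"

text \<open>Wreath product A wr B = K \<rtimes> B with K = functions B -> A and
  (x . alpha)_b = alpha_(x^-1 b); multiplication (alpha,x)(beta,y) = (alpha (x . beta), x y).\<close>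
definition wreath :: "('a, 'm) monoid_scheme \<Rightarrow> ('b, 'n) monoid_scheme \<Rightarrow> (('b \<Rightarrow> 'a) \<times> 'b) monoid" where
  "wreath A B = \<lparr> carrier = (carrier B \<rightarrow>\<^sub>E carrier A) \<times> carrier B,
     monoid.mult = (\<lambda>(\<alpha>, x) (\<beta>, y).
        ((\<lambda>b\<in>carrier B. \<alpha> b \<otimes>\<^bsub>A\<^esub> \<beta> (inv\<^bsub>B\<^esub> x \<otimes>\<^bsub>B\<^esub> b)), x \<otimes>\<^bsub>B\<^esub> y)),
     monoid.one = ((\<lambda>b\<in>carrier B. \<one>\<^bsub>A\<^esub>), \<one>\<^bsub>B\<^esub>) \<rparr>"

end

theory Submission
  imports Defs
begin

(* For x \<noteq> 1 in C_p, the p-th power of (\<alpha>, x) \<in> A \<wr> C_p lies in the base group, say (\<beta>, 1),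
   and commutes with (\<alpha>, x); so the coordinates of \<beta> are conjugate along the x-orbit, which is
   all of C_p, and ord (\<alpha>, x) = p * ord (\<beta> 1), where \<beta> 1 = \<alpha> 1 * t(\<alpha>) for a product t(\<alpha>)
   of the other coordinates of \<alpha>.  In the base group, ord (\<beta>, 1) is the largest order of a
   coordinate of \<beta>.  Hence the exponent f of A grows to f + 1; the base group contributes
   r_{A,k-1}^p / p to r_{A \<wr> C_p, k}, and each of the other p - 1 cosets contributes r_{A,k} / p,
   because \<alpha> \<mapsto> \<alpha> 1 * t(\<alpha>) takes every value of A equally often. *)

primrec ordered_prod :: "('a, 'm) monoid_scheme \<Rightarrow> (nat \<Rightarrow> 'a) \<Rightarrow> nat \<Rightarrow> 'a" where
  "ordered_prod G f 0 = \<one>\<^bsub>G\<^esub>"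
| "ordered_prod G f (Suc n) = ordered_prod G f n \<otimes>\<^bsub>G\<^esub> f n"

lemma ordered_prod_cong:
  "(\<And>i. i < n \<Longrightarrow> f i = g i) \<Longrightarrow> ordered_prod G f n = ordered_prod G g n"
  by (induction n) auto

context monoid
begin

lemma ordered_prod_closed:
  "(\<And>i. i < n \<Longrightarrow> f i \<in> carrier G) \<Longrightarrow> ordered_prod G f n \<in> carrier G"
  by (induction n) auto

lemma ordered_prod_const: "a \<in> carrier G \<Longrightarrow> ordered_prod G (\<lambda>_. a) n = a [^] n"
  by (induction n) auto

lemma ordered_prod_Suc_shift:
  "(\<And>i. i \<le> n \<Longrightarrow> f i \<in> carrier G) \<Longrightarrow>
   ordered_prod G f (Suc n) = f 0 \<otimes> ordered_prod G (\<lambda>i. f (Suc i)) n"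
  by (induction n) (simp_all add: m_assoc ordered_prod_closed)

end

lemma (in group) ord_conj:
  assumes u: "u \<in> carrier G" and a: "a \<in> carrier G"
  shows "ord (inv u \<otimes> a \<otimes> u) = ord a"
proof -
  have pow_conj: "(inv u \<otimes> a \<otimes> u) [^] n = inv u \<otimes> a [^] n \<otimes> u" for n :: nat
  proof (induction n)
    case (Suc n)
    have "(inv u \<otimes> a [^] n \<otimes> u) \<otimes> (inv u \<otimes> a \<otimes> u) = inv u \<otimes> (a [^] n \<otimes> a) \<otimes> u"
      using u a by (simp add: m_assoc) (simp add: m_assoc[symmetric])
    then show ?case using Suc by simp
  qed (use u in simp)
  have "inv u \<otimes> y \<otimes> u = \<one> \<longleftrightarrow> y = \<one>" if "y \<in> carrier G" for y
    using u that by (metis inv_closed inv_solve_left' l_cancel_one' m_closed r_one)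
  then show ?thesis
    using u a by (simp add: ord_unique pow_eq_id pow_conj)
qed

lemma p_group_ord_prime_power:
  assumes "prime p" "p_group p G" "a \<in> carrier G"
  shows "\<exists>i. group.ord G a = p ^ i"
  using assms group.ord_dvd_group_order divides_primepow_nat unfolding p_group_def by metis

lemma max_ord_exp_eqI:
  assumes "1 < p" "Max (group.ord G ` carrier G) = p ^ j"
  shows "max_ord_exp p G = j"
  unfolding max_ord_exp_def using assms by (auto intro: the_equality)

lemma p_group_Max_ord:
  assumes "prime p" "p_group p G"
  shows "Max (group.ord G ` carrier G) = p ^ max_ord_exp p G"
proof -
  have "finite (carrier G)" "\<one>\<^bsub>G\<^esub> \<in> carrier G"
    using assms(2) group.is_monoid unfolding p_group_def by auto
  then have "Max (group.ord G ` carrier G) \<in> group.ord G ` carrier G"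
    by (intro Max_in) auto
  then obtain j where "Max (group.ord G ` carrier G) = p ^ j"
    using p_group_ord_prime_power[OF assms] by (metis imageE)
  then show ?thesis
    using max_ord_exp_eqI prime_gt_1_nat[OF assms(1)] by metis
qed

lemma dvd_Max_prime_powers:
  fixes p :: nat
  assumes "1 < p" "finite S" "s \<in> S" "\<And>t. t \<in> S \<Longrightarrow> \<exists>i. t = p ^ i"
  shows "s dvd Max S"
proof -
  obtain i j where "s = p ^ i" "Max S = p ^ j"
    using assms(2-4) Max_in[of S] by blast
  moreover have "s \<le> Max S" using assms(2,3) by simp
  ultimately show ?thesis
    using assms(1) by (simp add: le_imp_power_dvd)
qed

lemma card_PiE_shear:
  assumes "group G" "finite I" "i \<in> I" "S \<subseteq> carrier G"
    and q_closed: "\<And>\<alpha>. \<alpha> \<in> I \<rightarrow>\<^sub>E carrier G \<Longrightarrow> q \<alpha> \<in> carrier G"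
    and q_fun_upd: "\<And>\<alpha> c. q (\<alpha>(i := c)) = q \<alpha>"
  shows "card {\<alpha> \<in> I \<rightarrow>\<^sub>E carrier G. \<alpha> i \<otimes>\<^bsub>G\<^esub> q \<alpha> \<in> S}
    = card S * card (carrier G) ^ (card I - 1)"
proof -
  interpret G: group G by fact
  let ?F = "{\<alpha> \<in> I \<rightarrow>\<^sub>E carrier G. \<alpha> i \<otimes>\<^bsub>G\<^esub> q \<alpha> \<in> S}"
  let ?H = "PiE I (\<lambda>j. if j = i then S else carrier G)"
  define \<phi> where "\<phi> \<alpha> = \<alpha>(i := \<alpha> i \<otimes>\<^bsub>G\<^esub> q \<alpha>)" for \<alpha>
  define \<psi> where "\<psi> \<alpha> = \<alpha>(i := \<alpha> i \<otimes>\<^bsub>G\<^esub> inv\<^bsub>G\<^esub> q \<alpha>)" for \<alpha>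
  have upd: "\<alpha>(i := c) \<in> I \<rightarrow>\<^sub>E carrier G" if "\<alpha> \<in> I \<rightarrow>\<^sub>E carrier G" "c \<in> carrier G" for \<alpha> c
    using that assms(3) by (auto simp: PiE_iff extensional_def)
  have H_sub: "?H \<subseteq> I \<rightarrow>\<^sub>E carrier G"
    using assms(4) by (intro PiE_mono) auto
  have \<psi>\<phi>: "\<psi> (\<phi> \<alpha>) = \<alpha>" and \<phi>\<psi>: "\<phi> (\<psi> \<alpha>) = \<alpha>" if "\<alpha> \<in> I \<rightarrow>\<^sub>E carrier G" for \<alpha>
    using that assms(3) q_closed[OF that]
    by (auto simp: \<phi>_def \<psi>_def q_fun_upd G.m_assoc PiE_iff)
  have "bij_betw \<phi> ?F ?H"
  proof (rule bij_betw_byWitness[where f' = \<psi>])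
    show "\<forall>\<alpha>\<in>?F. \<psi> (\<phi> \<alpha>) = \<alpha>" using \<psi>\<phi> by blast
    show "\<forall>\<alpha>\<in>?H. \<phi> (\<psi> \<alpha>) = \<alpha>" using \<phi>\<psi> H_sub by blast
    show "\<phi> ` ?F \<subseteq> ?H"
      using assms(3) q_closed by (auto simp: \<phi>_def PiE_iff extensional_def)
    show "\<psi> ` ?H \<subseteq> ?F"
    proof (rule image_subsetI)
      fix \<beta> assume \<beta>: "\<beta> \<in> ?H"
      then have \<beta>_PiE: "\<beta> \<in> I \<rightarrow>\<^sub>E carrier G" using H_sub by blast
      have "\<psi> \<beta> i \<otimes>\<^bsub>G\<^esub> q (\<psi> \<beta>) = \<beta> i"
        using \<phi>\<psi>[OF \<beta>_PiE] by (metis \<phi>_def fun_upd_same)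
      moreover have "\<psi> \<beta> \<in> I \<rightarrow>\<^sub>E carrier G"
        unfolding \<psi>_def using \<beta>_PiE q_closed[OF \<beta>_PiE] assms(3)
        by (intro upd) (auto simp: PiE_iff)
      ultimately show "\<psi> \<beta> \<in> ?F" using \<beta> assms(3) by (auto simp: PiE_iff)
    qed
  qed
  then have "card ?F = card ?H" by (rule bij_betw_same_card)
  also have "\<dots> = card S * (\<Prod>j\<in>I - {i}. card (carrier G))"
    using assms(2,3) by (simp add: card_PiE prod.remove)
  also have "\<dots> = card S * card (carrier G) ^ (card I - 1)"
    using assms(2,3) by simp
  finally show ?thesis .
qed

locale wreath_product = A: group A + B: group B
  for A :: "('a, 'm) monoid_scheme" and B :: "('b, 'n) monoid_scheme"
begin

abbreviation W :: "(('b \<Rightarrow> 'a) \<times> 'b) monoid" where "W \<equiv> wreath A B"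

lemma carrier_wreath: "carrier W = (carrier B \<rightarrow>\<^sub>E carrier A) \<times> carrier B"
  by (simp add: wreath_def)

lemma mult_wreath: "(\<alpha>, x) \<otimes>\<^bsub>W\<^esub> (\<beta>, y) =
   ((\<lambda>b\<in>carrier B. \<alpha> b \<otimes>\<^bsub>A\<^esub> \<beta> (inv\<^bsub>B\<^esub> x \<otimes>\<^bsub>B\<^esub> b)), x \<otimes>\<^bsub>B\<^esub> y)"
  by (simp add: wreath_def)

lemma one_wreath: "\<one>\<^bsub>W\<^esub> = ((\<lambda>b\<in>carrier B. \<one>\<^bsub>A\<^esub>), \<one>\<^bsub>B\<^esub>)"
  by (simp add: wreath_def)

lemma group_wreath: "group W"
proof (rule groupI)
  fix g h assume "g \<in> carrier W" "h \<in> carrier W"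
  then show "g \<otimes>\<^bsub>W\<^esub> h \<in> carrier W"
    by (cases g, cases h) (auto simp: carrier_wreath mult_wreath PiE_iff)
next
  show "\<one>\<^bsub>W\<^esub> \<in> carrier W" by (auto simp: carrier_wreath one_wreath)
next
  fix g h k assume "g \<in> carrier W" "h \<in> carrier W" "k \<in> carrier W"
  then obtain \<alpha> x \<beta> y \<gamma> z where g: "g = (\<alpha>, x)" and h: "h = (\<beta>, y)" and k: "k = (\<gamma>, z)"
    and x: "x \<in> carrier B" and y: "y \<in> carrier B" and z: "z \<in> carrier B"
    and \<alpha>: "\<alpha> \<in> carrier B \<rightarrow>\<^sub>E carrier A" and \<beta>: "\<beta> \<in> carrier B \<rightarrow>\<^sub>E carrier A"
    and \<gamma>: "\<gamma> \<in> carrier B \<rightarrow>\<^sub>E carrier A"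
    by (auto simp: carrier_wreath)
  have inv_xy: "inv\<^bsub>B\<^esub> (x \<otimes>\<^bsub>B\<^esub> y) \<otimes>\<^bsub>B\<^esub> b = inv\<^bsub>B\<^esub> y \<otimes>\<^bsub>B\<^esub> (inv\<^bsub>B\<^esub> x \<otimes>\<^bsub>B\<^esub> b)"
    if "b \<in> carrier B" for b
    using x y that by (simp add: B.inv_mult_group B.m_assoc)
  show "g \<otimes>\<^bsub>W\<^esub> h \<otimes>\<^bsub>W\<^esub> k = g \<otimes>\<^bsub>W\<^esub> (h \<otimes>\<^bsub>W\<^esub> k)"
    unfolding g h k mult_wreath using x y z \<alpha> \<beta> \<gamma>
    by (auto simp: inv_xy A.m_assoc B.m_assoc PiE_iff intro!: ext)
next
  fix g assume "g \<in> carrier W"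
  then obtain \<alpha> x where g: "g = (\<alpha>, x)" and x: "x \<in> carrier B"
    and \<alpha>: "\<alpha> \<in> carrier B \<rightarrow>\<^sub>E carrier A"
    by (auto simp: carrier_wreath)
  show "\<one>\<^bsub>W\<^esub> \<otimes>\<^bsub>W\<^esub> g = g"
    unfolding g one_wreath mult_wreath using x \<alpha>
    by (auto simp: PiE_iff extensional_def intro!: ext)
  let ?h = "((\<lambda>b\<in>carrier B. inv\<^bsub>A\<^esub> (\<alpha> (x \<otimes>\<^bsub>B\<^esub> b))), inv\<^bsub>B\<^esub> x)"
  have "?h \<otimes>\<^bsub>W\<^esub> g = \<one>\<^bsub>W\<^esub>"
    unfolding g one_wreath mult_wreath using x \<alpha>
    by (auto simp: PiE_iff B.m_assoc[symmetric] intro!: ext)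
  moreover have "?h \<in> carrier W"
    using x \<alpha> by (auto simp: carrier_wreath PiE_iff)
  ultimately show "\<exists>h\<in>carrier W. h \<otimes>\<^bsub>W\<^esub> g = \<one>\<^bsub>W\<^esub>" by blast
qed

sublocale W: group W
  by (rule group_wreath)

lemma pow_wreath:
  assumes "\<alpha> \<in> carrier B \<rightarrow>\<^sub>E carrier A" "x \<in> carrier B"
  shows "(\<alpha>, x) [^]\<^bsub>W\<^esub> n =
    ((\<lambda>b\<in>carrier B. ordered_prod A (\<lambda>i. \<alpha> (inv\<^bsub>B\<^esub> (x [^]\<^bsub>B\<^esub> i) \<otimes>\<^bsub>B\<^esub> b)) n), x [^]\<^bsub>B\<^esub> n)"
proof (induction n)
  case 0
  then show ?case by (simp add: one_wreath restrict_def)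
next
  case (Suc n)
  then show ?case
    unfolding nat_pow_Suc Suc mult_wreath using assms
    by (auto intro!: ext simp del: nat_pow_Suc)
qed

lemma pow_base_eq_one_iff:
  assumes \<beta>: "\<beta> \<in> carrier B \<rightarrow>\<^sub>E carrier A"
  shows "(\<beta>, \<one>\<^bsub>B\<^esub>) [^]\<^bsub>W\<^esub> (n::nat) = \<one>\<^bsub>W\<^esub> \<longleftrightarrow> (\<forall>b\<in>carrier B. A.ord (\<beta> b) dvd n)"
proof -
  have "(\<beta>, \<one>\<^bsub>B\<^esub>) [^]\<^bsub>W\<^esub> n = ((\<lambda>b\<in>carrier B. \<beta> b [^]\<^bsub>A\<^esub> n), \<one>\<^bsub>B\<^esub>)"
    using pow_wreath[OF \<beta> B.one_closed] \<beta> by (auto simp: A.ordered_prod_const PiE_iff intro!: ext)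
  then have "(\<beta>, \<one>\<^bsub>B\<^esub>) [^]\<^bsub>W\<^esub> n = \<one>\<^bsub>W\<^esub> \<longleftrightarrow> (\<forall>b\<in>carrier B. \<beta> b [^]\<^bsub>A\<^esub> n = \<one>\<^bsub>A\<^esub>)"
    by (auto simp: one_wreath fun_eq_iff restrict_def split: if_splits)
  also have "\<dots> \<longleftrightarrow> (\<forall>b\<in>carrier B. A.ord (\<beta> b) dvd n)"
    using \<beta> A.pow_eq_id by (auto simp: PiE_iff)
  finally show ?thesis .
qed

lemma ord_power_component_shift:
  assumes \<alpha>: "\<alpha> \<in> carrier B \<rightarrow>\<^sub>E carrier A" and x: "x \<in> carrier B"
    and x_n: "x [^]\<^bsub>B\<^esub> (n::nat) = \<one>\<^bsub>B\<^esub>" and b: "b \<in> carrier B"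
  shows "A.ord (fst ((\<alpha>, x) [^]\<^bsub>W\<^esub> n) (x \<otimes>\<^bsub>B\<^esub> b)) = A.ord (fst ((\<alpha>, x) [^]\<^bsub>W\<^esub> n) b)"
proof -
  define \<beta> where "\<beta> = fst ((\<alpha>, x) [^]\<^bsub>W\<^esub> n)"
  define c where "c = x \<otimes>\<^bsub>B\<^esub> b"
  have g: "(\<alpha>, x) \<in> carrier W" using \<alpha> x by (simp add: carrier_wreath)
  have g_n: "(\<alpha>, x) [^]\<^bsub>W\<^esub> n = (\<beta>, \<one>\<^bsub>B\<^esub>)"
    using pow_wreath[OF \<alpha> x, of n] x_n by (simp add: \<beta>_def)
  have \<beta>: "\<beta> \<in> carrier B \<rightarrow>\<^sub>E carrier A"
    using W.nat_pow_closed[OF g, of n] g_n by (simp add: carrier_wreath)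
  have c: "c \<in> carrier B" and b_c: "inv\<^bsub>B\<^esub> x \<otimes>\<^bsub>B\<^esub> c = b"
    using x b by (simp_all add: c_def B.m_assoc[symmetric])
  \<comment> \<open>\<open>(\<alpha>, x)\<close> commutes with its power \<open>(\<beta>, \<one>)\<close>, which makes \<open>\<beta> b\<close> a conjugate of \<open>\<beta> c\<close>\<close>
  have "(\<beta>, \<one>\<^bsub>B\<^esub>) \<otimes>\<^bsub>W\<^esub> (\<alpha>, x) = (\<alpha>, x) \<otimes>\<^bsub>W\<^esub> (\<beta>, \<one>\<^bsub>B\<^esub>)"
    using W.nat_pow_Suc2[OF g, of n] W.nat_pow_Suc[of "(\<alpha>, x)" n] g_n by metis
  then have "\<beta> c \<otimes>\<^bsub>A\<^esub> \<alpha> c = \<alpha> c \<otimes>\<^bsub>A\<^esub> \<beta> b"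
    using c b_c by (simp add: mult_wreath fun_eq_iff split: if_splits)
  then have "\<beta> b = inv\<^bsub>A\<^esub> (\<alpha> c) \<otimes>\<^bsub>A\<^esub> \<beta> c \<otimes>\<^bsub>A\<^esub> \<alpha> c"
    using \<alpha> \<beta> b c by (auto simp: PiE_iff A.m_assoc A.inv_solve_left)
  then show ?thesis
    using A.ord_conj \<alpha> \<beta> c by (auto simp: \<beta>_def[symmetric] c_def[symmetric] PiE_iff)
qed

end

locale wreath_by_prime_order = wreath_product A B
  for A :: "('a, 'm) monoid_scheme" and B :: "('b, 'n) monoid_scheme" +
  fixes p :: nat
  assumes prime_p: "prime p" and p_group_A: "p_group p A" and order_B: "order B = p"
begin

lemma p_gt_1: "1 < p"
  using prime_p prime_gt_1_nat by blast

lemma finite_A: "finite (carrier A)"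
  using p_group_A by (simp add: p_group_def)

lemma card_B: "card (carrier B) = p"
  using order_B by (simp add: order_def)

lemma finite_B: "finite (carrier B)"
  using card_B p_gt_1 card.infinite by fastforce

lemma ord_A_le_max: "a \<in> carrier A \<Longrightarrow> A.ord a \<le> p ^ max_ord_exp p A"
  using p_group_Max_ord[OF prime_p p_group_A] finite_A by (metis Max_ge finite_imageI imageI)

lemma ord_B_nontrivial:
  assumes "x \<in> carrier B" "x \<noteq> \<one>\<^bsub>B\<^esub>"
  shows "B.ord x = p"
proof -
  have "B.ord x dvd p" using B.ord_dvd_group_order[OF assms(1)] order_B by simp
  moreover have "B.ord x \<noteq> 1" using B.ord_eq_1[OF assms(1)] assms(2) by simp
  ultimately show ?thesis using prime_p by (auto simp: prime_nat_iff)
qed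

lemma pow_B_ne_one:
  "x \<in> carrier B \<Longrightarrow> x \<noteq> \<one>\<^bsub>B\<^esub> \<Longrightarrow> 0 < j \<Longrightarrow> j < p \<Longrightarrow> x [^]\<^bsub>B\<^esub> j \<noteq> \<one>\<^bsub>B\<^esub>"
  using B.pow_eq_id ord_B_nontrivial by (auto dest: dvd_imp_le)

lemma B_eq_powers:
  assumes x: "x \<in> carrier B" "x \<noteq> \<one>\<^bsub>B\<^esub>" and b: "b \<in> carrier B"
  shows "\<exists>i::nat. b = x [^]\<^bsub>B\<^esub> i"
proof -
  have "generate B {x} = carrier B"
  proof (rule card_subset_eq[OF finite_B])
    show "generate B {x} \<subseteq> carrier B" using x by (simp add: B.generate_incl)
    show "card (generate B {x}) = card (carrier B)"
      using B.generate_pow_card[OF x(1)] ord_B_nontrivial[OF x] card_B by simp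
  qed
  then show ?thesis using B.generate_pow_on_finite_carrier[OF finite_B x(1)] b by auto
qed

lemma ord_wreath_base:
  assumes \<beta>: "\<beta> \<in> carrier B \<rightarrow>\<^sub>E carrier A"
  shows "W.ord (\<beta>, \<one>\<^bsub>B\<^esub>) = Max ((\<lambda>b. A.ord (\<beta> b)) ` carrier B)"
proof -
  let ?S = "(\<lambda>b. A.ord (\<beta> b)) ` carrier B"
  have S: "finite ?S" "?S \<noteq> {}" using finite_B by auto
  have powers: "\<exists>i. t = p ^ i" if "t \<in> ?S" for t
    using that p_group_ord_prime_power[OF prime_p p_group_A] \<beta> by (auto simp: PiE_iff)
  have "(\<forall>b\<in>carrier B. A.ord (\<beta> b) dvd n) \<longleftrightarrow> Max ?S dvd n" for n
  proof
    assume "\<forall>b\<in>carrier B. A.ord (\<beta> b) dvd n"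
    then show "Max ?S dvd n" using Max_in[OF S] by auto
  next
    assume "Max ?S dvd n"
    then show "\<forall>b\<in>carrier B. A.ord (\<beta> b) dvd n"
      using dvd_Max_prime_powers[OF p_gt_1 S(1) _ powers] dvd_trans by blast
  qed
  then have "(\<beta>, \<one>\<^bsub>B\<^esub>) [^]\<^bsub>W\<^esub> n = \<one>\<^bsub>W\<^esub> \<longleftrightarrow> Max ?S dvd n" for n :: nat
    using pow_base_eq_one_iff[OF \<beta>] by simp
  moreover have "(\<beta>, \<one>\<^bsub>B\<^esub>) \<in> carrier W" using \<beta> by (simp add: carrier_wreath)
  ultimately show ?thesis using W.ord_unique by blast
qed

lemma ord_wreath_nonbase:
  assumes \<alpha>: "\<alpha> \<in> carrier B \<rightarrow>\<^sub>E carrier A" and x: "x \<in> carrier B" "x \<noteq> \<one>\<^bsub>B\<^esub>"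
  shows "W.ord (\<alpha>, x) = p * A.ord (fst ((\<alpha>, x) [^]\<^bsub>W\<^esub> p) \<one>\<^bsub>B\<^esub>)"
proof -
  define \<beta> where "\<beta> = fst ((\<alpha>, x) [^]\<^bsub>W\<^esub> p)"
  have g: "(\<alpha>, x) \<in> carrier W" using \<alpha> x by (simp add: carrier_wreath)
  have x_p: "x [^]\<^bsub>B\<^esub> p = \<one>\<^bsub>B\<^esub>" using B.pow_order_eq_1[OF x(1)] order_B by simp
  have g_p: "(\<alpha>, x) [^]\<^bsub>W\<^esub> p = (\<beta>, \<one>\<^bsub>B\<^esub>)"
    using pow_wreath[OF \<alpha> x(1), of p] x_p by (simp add: \<beta>_def)
  have \<beta>: "\<beta> \<in> carrier B \<rightarrow>\<^sub>E carrier A"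
    using W.nat_pow_closed[OF g, of p] g_p by (simp add: carrier_wreath)
  have "A.ord (\<beta> (x [^]\<^bsub>B\<^esub> i)) = A.ord (\<beta> \<one>\<^bsub>B\<^esub>)" for i :: nat
  proof (induction i)
    case (Suc i)
    then show ?case
      using ord_power_component_shift[OF \<alpha> x(1) x_p, of "x [^]\<^bsub>B\<^esub> i"] B.nat_pow_Suc2[OF x(1), of i] x(1)
      by (simp add: \<beta>_def del: nat_pow_Suc)
  qed simp
  then have "(\<lambda>b. A.ord (\<beta> b)) ` carrier B = {A.ord (\<beta> \<one>\<^bsub>B\<^esub>)}"
    using B_eq_powers[OF x] B.one_closed by fastforce
  then have "W.ord ((\<alpha>, x) [^]\<^bsub>W\<^esub> p) = A.ord (\<beta> \<one>\<^bsub>B\<^esub>)"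
    using ord_wreath_base[OF \<beta>] g_p by simp
  moreover have "p dvd W.ord (\<alpha>, x)"
  proof -
    have "x [^]\<^bsub>B\<^esub> W.ord (\<alpha>, x) = \<one>\<^bsub>B\<^esub>"
      using W.pow_ord_eq_1[OF g] pow_wreath[OF \<alpha> x(1)] by (simp add: one_wreath)
    then show ?thesis using B.pow_eq_id[OF x(1)] ord_B_nontrivial[OF x] by simp
  qed
  ultimately have "W.ord (\<alpha>, x) div p = A.ord (\<beta> \<one>\<^bsub>B\<^esub>)"
    using W.ord_pow[OF g, of p] p_gt_1 by simp
  then show ?thesis
    using \<open>p dvd W.ord (\<alpha>, x)\<close> by (metis \<beta>_def dvd_mult_div_cancel)
qed

definition cycle_tail :: "('b \<Rightarrow> 'a) \<Rightarrow> 'b \<Rightarrow> 'a" where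
  "cycle_tail \<alpha> x = ordered_prod A (\<lambda>i. \<alpha> (inv\<^bsub>B\<^esub> (x [^]\<^bsub>B\<^esub> Suc i))) (p - 1)"

lemma cycle_tail_closed:
  "\<alpha> \<in> carrier B \<rightarrow>\<^sub>E carrier A \<Longrightarrow> x \<in> carrier B \<Longrightarrow> cycle_tail \<alpha> x \<in> carrier A"
  unfolding cycle_tail_def by (intro A.ordered_prod_closed) (auto simp: PiE_iff simp del: nat_pow_Suc)

lemma cycle_tail_fun_upd_one:
  assumes "x \<in> carrier B" "x \<noteq> \<one>\<^bsub>B\<^esub>"
  shows "cycle_tail (\<alpha>(\<one>\<^bsub>B\<^esub> := c)) x = cycle_tail \<alpha> x"
  unfolding cycle_tail_def
proof (intro ordered_prod_cong)
  fix i assume "i < p - 1"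
  then have "x [^]\<^bsub>B\<^esub> Suc i \<noteq> \<one>\<^bsub>B\<^esub>" using pow_B_ne_one[OF assms, of "Suc i"] by simp
  then show "(\<alpha>(\<one>\<^bsub>B\<^esub> := c)) (inv\<^bsub>B\<^esub> (x [^]\<^bsub>B\<^esub> Suc i)) = \<alpha> (inv\<^bsub>B\<^esub> (x [^]\<^bsub>B\<^esub> Suc i))"
    using assms(1) by simp
qed

lemma fst_pow_p_one:
  assumes \<alpha>: "\<alpha> \<in> carrier B \<rightarrow>\<^sub>E carrier A" and x: "x \<in> carrier B"
  shows "fst ((\<alpha>, x) [^]\<^bsub>W\<^esub> p) \<one>\<^bsub>B\<^esub> = \<alpha> \<one>\<^bsub>B\<^esub> \<otimes>\<^bsub>A\<^esub> cycle_tail \<alpha> x"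
proof -
  have "fst ((\<alpha>, x) [^]\<^bsub>W\<^esub> p) \<one>\<^bsub>B\<^esub> = ordered_prod A (\<lambda>i. \<alpha> (inv\<^bsub>B\<^esub> (x [^]\<^bsub>B\<^esub> i))) (Suc (p - 1))"
    using pow_wreath[OF \<alpha> x, of p] p_gt_1 x by (simp del: nat_pow_Suc)
  also have "\<dots> = \<alpha> \<one>\<^bsub>B\<^esub> \<otimes>\<^bsub>A\<^esub> cycle_tail \<alpha> x"
    unfolding cycle_tail_def using \<alpha> x
    by (subst A.ordered_prod_Suc_shift) (auto simp: PiE_iff simp del: nat_pow_Suc)
  finally show ?thesis .
qed

lemma ord_wreath_le:
  assumes "g \<in> carrier W"
  shows "W.ord g \<le> p ^ Suc (max_ord_exp p A)"
proof -
  obtain \<alpha> x where g: "g = (\<alpha>, x)" and \<alpha>: "\<alpha> \<in> carrier B \<rightarrow>\<^sub>E carrier A" and x: "x \<in> carrier B"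
    using assms by (auto simp: carrier_wreath)
  show ?thesis
  proof (cases "x = \<one>\<^bsub>B\<^esub>")
    case True
    have "A.ord (\<alpha> b) \<le> p ^ max_ord_exp p A" if "b \<in> carrier B" for b
      using that \<alpha> ord_A_le_max by (auto simp: PiE_iff)
    then have "W.ord g \<le> p ^ max_ord_exp p A"
      unfolding g True ord_wreath_base[OF \<alpha>] using finite_B B.one_closed
      by (subst Max_le_iff) auto
    also have "\<dots> \<le> p ^ Suc (max_ord_exp p A)" using p_gt_1 by simp
    finally show ?thesis .
  next
    case False
    have "A.ord (fst ((\<alpha>, x) [^]\<^bsub>W\<^esub> p) \<one>\<^bsub>B\<^esub>) \<le> p ^ max_ord_exp p A"
      using fst_pow_p_one[OF \<alpha> x] cycle_tail_closed[OF \<alpha> x] \<alpha> ord_A_le_max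
      by (simp add: PiE_iff)
    then show ?thesis using ord_wreath_nonbase[OF \<alpha> x False] by (simp add: g)
  qed
qed

lemma ord_wreath_attains: "\<exists>g\<in>carrier W. W.ord g = p ^ Suc (max_ord_exp p A)"
proof -
  have "p ^ max_ord_exp p A \<in> A.ord ` carrier A"
    using p_group_Max_ord[OF prime_p p_group_A] finite_A A.one_closed
    by (metis Max_in empty_iff finite_imageI image_is_empty)
  then obtain a where a: "a \<in> carrier A" "A.ord a = p ^ max_ord_exp p A" by auto
  have "carrier B \<noteq> {\<one>\<^bsub>B\<^esub>}" using card_B p_gt_1 by auto
  then obtain x where x: "x \<in> carrier B" "x \<noteq> \<one>\<^bsub>B\<^esub>" using B.one_closed by blast
  define \<alpha> where "\<alpha> = (\<lambda>b\<in>carrier B. \<one>\<^bsub>A\<^esub>)(\<one>\<^bsub>B\<^esub> := a)"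
  have \<alpha>: "\<alpha> \<in> carrier B \<rightarrow>\<^sub>E carrier A" using a B.one_closed by (auto simp: \<alpha>_def PiE_iff extensional_def)
  have "cycle_tail \<alpha> x = cycle_tail (\<lambda>b\<in>carrier B. \<one>\<^bsub>A\<^esub>) x"
    unfolding \<alpha>_def by (rule cycle_tail_fun_upd_one[OF x])
  also have "\<dots> = ordered_prod A (\<lambda>_. \<one>\<^bsub>A\<^esub>) (p - 1)"
    unfolding cycle_tail_def using x(1) by (intro ordered_prod_cong) (simp del: nat_pow_Suc)
  also have "\<dots> = \<one>\<^bsub>A\<^esub>" by (simp add: A.ordered_prod_const)
  finally have "fst ((\<alpha>, x) [^]\<^bsub>W\<^esub> p) \<one>\<^bsub>B\<^esub> = a"
    using fst_pow_p_one[OF \<alpha> x(1)] a(1) by (simp add: \<alpha>_def)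
  then have "W.ord (\<alpha>, x) = p ^ Suc (max_ord_exp p A)"
    using ord_wreath_nonbase[OF \<alpha> x] a(2) by simp
  moreover have "(\<alpha>, x) \<in> carrier W" using \<alpha> x by (simp add: carrier_wreath)
  ultimately show ?thesis by blast
qed

lemma finite_W: "finite (carrier W)"
  using finite_A finite_B by (simp add: carrier_wreath finite_PiE)

lemma max_ord_exp_wreath: "max_ord_exp p W = Suc (max_ord_exp p A)"
proof -
  have "Max (W.ord ` carrier W) = p ^ Suc (max_ord_exp p A)"
  proof (rule Max_eqI)
    show "finite (W.ord ` carrier W)" using finite_W by simp
    show "n \<le> p ^ Suc (max_ord_exp p A)" if "n \<in> W.ord ` carrier W" for n
      using that ord_wreath_le by blast
    show "p ^ Suc (max_ord_exp p A) \<in> W.ord ` carrier W"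
      using ord_wreath_attains by (metis image_eqI)
  qed
  then show ?thesis by (rule max_ord_exp_eqI[OF p_gt_1])
qed

lemma card_wreath_fibres:
  "card {g \<in> carrier W. P g} = (\<Sum>x\<in>carrier B. card {\<alpha> \<in> carrier B \<rightarrow>\<^sub>E carrier A. P (\<alpha>, x)})"
proof -
  let ?\<Sigma> = "SIGMA x:carrier B. {\<alpha> \<in> carrier B \<rightarrow>\<^sub>E carrier A. P (\<alpha>, x)}"
  have "{g \<in> carrier W. P g} = (\<lambda>(x, \<alpha>). (\<alpha>, x)) ` ?\<Sigma>"
    by (auto simp: carrier_wreath image_iff)
  then have "card {g \<in> carrier W. P g} = card ?\<Sigma>"
    by (simp add: card_image inj_on_def)
  then show ?thesis
    using finite_A finite_B by (simp add: finite_PiE)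
qed

lemma card_base_fibre:
  "card {\<beta> \<in> carrier B \<rightarrow>\<^sub>E carrier A. real (W.ord (\<beta>, \<one>\<^bsub>B\<^esub>)) \<le> T}
   = card {a \<in> carrier A. real (A.ord a) \<le> T} ^ p"
proof -
  have "real (W.ord (\<beta>, \<one>\<^bsub>B\<^esub>)) \<le> T \<longleftrightarrow> (\<forall>b\<in>carrier B. real (A.ord (\<beta> b)) \<le> T)"
    if "\<beta> \<in> carrier B \<rightarrow>\<^sub>E carrier A" for \<beta>
  proof -
    have "carrier B \<noteq> {}" using B.one_closed by blast
    then have "real (W.ord (\<beta>, \<one>\<^bsub>B\<^esub>)) = Max ((\<lambda>b. real (A.ord (\<beta> b))) ` carrier B)"
      using ord_wreath_base[OF that] finite_B by (simp add: mono_Max_commute[of real] image_image mono_def)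
    then show ?thesis using finite_B \<open>carrier B \<noteq> {}\<close> by simp
  qed
  then have "{\<beta> \<in> carrier B \<rightarrow>\<^sub>E carrier A. real (W.ord (\<beta>, \<one>\<^bsub>B\<^esub>)) \<le> T}
      = carrier B \<rightarrow>\<^sub>E {a \<in> carrier A. real (A.ord a) \<le> T}"
    by (auto simp: PiE_iff extensional_def)
  then show ?thesis
    using finite_B card_B by (simp add: card_PiE)
qed

lemma card_nonbase_fibre:
  assumes x: "x \<in> carrier B" "x \<noteq> \<one>\<^bsub>B\<^esub>"
  shows "card {\<alpha> \<in> carrier B \<rightarrow>\<^sub>E carrier A. real (W.ord (\<alpha>, x)) \<le> real p * T}
    = card {a \<in> carrier A. real (A.ord a) \<le> T} * card (carrier A) ^ (p - 1)"
proof -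
  have "real (W.ord (\<alpha>, x)) \<le> real p * T \<longleftrightarrow>
      \<alpha> \<one>\<^bsub>B\<^esub> \<otimes>\<^bsub>A\<^esub> cycle_tail \<alpha> x \<in> {a \<in> carrier A. real (A.ord a) \<le> T}"
    if "\<alpha> \<in> carrier B \<rightarrow>\<^sub>E carrier A" for \<alpha>
    using ord_wreath_nonbase[OF that x] fst_pow_p_one[OF that x(1)] cycle_tail_closed[OF that x(1)]
      that p_gt_1 by (auto simp: PiE_iff)
  then have "card {\<alpha> \<in> carrier B \<rightarrow>\<^sub>E carrier A. real (W.ord (\<alpha>, x)) \<le> real p * T}
      = card {\<alpha> \<in> carrier B \<rightarrow>\<^sub>E carrier A.
           \<alpha> \<one>\<^bsub>B\<^esub> \<otimes>\<^bsub>A\<^esub> cycle_tail \<alpha> x \<in> {a \<in> carrier A. real (A.ord a) \<le> T}}"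
    by (metis (no_types, lifting))
  also have "\<dots> = card {a \<in> carrier A. real (A.ord a) \<le> T} * card (carrier A) ^ (card (carrier B) - 1)"
    by (rule card_PiE_shear[OF A.is_group finite_B B.one_closed _ cycle_tail_closed[OF _ x(1)]
          cycle_tail_fun_upd_one[OF x]]) auto
  finally show ?thesis using card_B by simp
qed

lemma card_wreath_ord_le:
  "card {g \<in> carrier W. real (W.ord g) \<le> real p * T}
   = card {a \<in> carrier A. real (A.ord a) \<le> real p * T} ^ p
     + (p - 1) * (card {a \<in> carrier A. real (A.ord a) \<le> T} * card (carrier A) ^ (p - 1))"
proof -
  let ?fibre = "\<lambda>x. card {\<alpha> \<in> carrier B \<rightarrow>\<^sub>E carrier A. real (W.ord (\<alpha>, x)) \<le> real p * T}"
  have "card {g \<in> carrier W. real (W.ord g) \<le> real p * T} = (\<Sum>x\<in>carrier B. ?fibre x)"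
    by (rule card_wreath_fibres)
  also have "\<dots> = ?fibre \<one>\<^bsub>B\<^esub> + (\<Sum>x\<in>carrier B - {\<one>\<^bsub>B\<^esub>}. ?fibre x)"
    using finite_B B.one_closed by (rule sum.remove)
  also have "\<dots> = card {a \<in> carrier A. real (A.ord a) \<le> real p * T} ^ p
     + (p - 1) * (card {a \<in> carrier A. real (A.ord a) \<le> T} * card (carrier A) ^ (p - 1))"
    using card_base_fibre card_nonbase_fibre finite_B card_B by simp
  finally show ?thesis .
qed

lemma r_ratio_wreath:
  "r_ratio p W k = (1 - 1 / real p) * r_ratio p A k + r_ratio p A (k - 1) ^ p / real p"
proof -
  define T where "T = real p powi (int (max_ord_exp p A) - k)"
  define N where "N = card (carrier A)"
  define n0 where "n0 = card {a \<in> carrier A. real (A.ord a) \<le> T}"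
  define n1 where "n1 = card {a \<in> carrier A. real (A.ord a) \<le> real p * T}"
  have T_shift: "real p powi (int (max_ord_exp p W) - k) = real p * T"
    "real p powi (int (max_ord_exp p A) - (k - 1)) = real p * T"
  proof -
    have "int (max_ord_exp p W) - k = 1 + (int (max_ord_exp p A) - k)"
      "int (max_ord_exp p A) - (k - 1) = 1 + (int (max_ord_exp p A) - k)"
      by (simp_all add: max_ord_exp_wreath)
    moreover have "real p powi (1 + e) = real p * real p powi e" for e
      using p_gt_1 by (simp add: power_int_add)
    ultimately show "real p powi (int (max_ord_exp p W) - k) = real p * T"
      "real p powi (int (max_ord_exp p A) - (k - 1)) = real p * T"
      by (simp_all only: T_def)
  qed
  have order_W: "order W = N ^ p * p"
    using finite_A finite_B card_B by (simp add: order_def carrier_wreath card_cartesian_product card_PiE N_def)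
  have "0 < N" using finite_A A.one_closed by (auto simp: N_def card_gt_0_iff)
  have N_pow: "real N ^ p = real N * real N ^ (p - 1)"
    using p_gt_1 by (metis Suc_diff_1 order.strict_trans zero_less_one power_Suc)
  have "r_ratio p W k = (real n1 ^ p + (real p - 1) * (real n0 * real N ^ (p - 1))) / (real N ^ p * real p)"
    unfolding r_ratio_def T_shift order_W card_wreath_ord_le using p_gt_1
    by (simp add: n0_def n1_def N_def of_nat_diff)
  also have "\<dots> = (1 - 1 / real p) * (real n0 / real N) + (real n1 / real N) ^ p / real p"
    using \<open>0 < N\<close> p_gt_1 N_pow by (simp add: field_simps power_divide)
  also have "\<dots> = (1 - 1 / real p) * r_ratio p A k + r_ratio p A (k - 1) ^ p / real p"
    unfolding r_ratio_def T_shift by (simp add: T_def n0_def n1_def N_def order_def)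
  finally show ?thesis .
qed

end

theorem corollary5p1:
  fixes p :: nat and A :: "('a, 'm) monoid_scheme" and k :: int
  assumes "prime p" and "p_group p A" and "order A > 1"
  shows "r_ratio p (wreath A (integer_mod_group p)) k
           = (1 - 1 / real p) * r_ratio p A k + (r_ratio p A (k - 1)) ^ p / real p"
proof -
  have "order (integer_mod_group p) = p"
    using prime_gt_0_nat[OF assms(1)] by (simp add: order_def carrier_integer_mod_group)
  then interpret wreath_by_prime_order A "integer_mod_group p" p
    using assms(1,2) group_integer_mod_group
    by (intro wreath_by_prime_order.intro wreath_product.intro wreath_by_prime_order_axioms.intro)
      (auto simp: p_group_def)
  show ?thesis by (rule r_ratio_wreath)
qed

end
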